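(* Every non-empty observable hyperproperty is a liveness hyperproperty.
   Context: $\Psi_{\mathrm{inf}}$ and $\Psi_{\mathrm{fin}}$ denote the sets of infinite and of finite traces (sequences of states). $\mathit{Prop}=\mathcal{P}(\Psi_{\mathrm{inf}})$ is the set of all sets of infinite traces. $\mathit{Obs}=\mathcal{P}^{\mathrm{fin}}(\Psi_{\mathrm{fin}})$ is the set of finite sets of finite traces. A hyperproperty is a subset $P\subseteq\mathit{Prop}$. For $S\in\mathit{Obs}$ and $T\in\mathit{Prop}$, $S\le T$ iff for every $t\in S$ there is a trace $t'$ such that the concatenation $t\circ t'$ is in $T$. $P$ is a liveness hyperproperty iff for every $S\in\mathit{Obs}$ there exists $S'\in\mathit{Prop}$ with $S\le S'$ and $S'\in P$. $P$ is an observable hyperproperty iff for every $S\in P$ there exists $T\in\mathit{Obs}$ with $T\le S$ such that every $S'\in\mathit{Prop}$ with $T\le S'$ belongs to $P$. *)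

theory Defs
  imports "HOL-Library.Omega_Words_Fun"
begin

(* Infinite traces over state type 'a: 'a word = nat => 'a.
   Finite traces: 'a list.  Prop = 'a word set.  Obs = finite 'a list set. *)

definition obs_le :: "'a list set \<Rightarrow> 'a word set \<Rightarrow> bool" where
  "obs_le S T \<longleftrightarrow> (\<forall>t\<in>S. \<exists>t'. t \<frown> t' \<in> T)"

definition liveness_hyperproperty :: "'a word set set \<Rightarrow> bool" where
  "liveness_hyperproperty P \<longleftrightarrow>
     (\<forall>S :: 'a list set. finite S \<longrightarrow> (\<exists>S'. obs_le S S' \<and> S' \<in> P))"

definition observable_hyperproperty :: "'a word set set \<Rightarrow> bool" where
  "observable_hyperproperty P \<longleftrightarrow>
     (\<forall>S\<in>P. \<exists>T :: 'a list set. finite T \<and> obs_le T S \<and>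
        (\<forall>S'. obs_le T S' \<longrightarrow> S' \<in> P))"

end

theory Submission
  imports Defs
begin

(* Fix any S0 in P with a witnessing observation T. Every observation S lies below the union
   of S0 with arbitrary infinite extensions of the traces of S; this union still extends T,
   so by observability it belongs to P. *)

lemma obs_le_mono: "obs_le S T \<Longrightarrow> T \<subseteq> T' \<Longrightarrow> obs_le S T'"
  unfolding obs_le_def by blast

lemma obs_le_conc: "obs_le S ((\<lambda>s. s \<frown> w) ` S)"
  unfolding obs_le_def by blast

theorem theorem4:
  fixes P :: "'a word set set"
  assumes "P \<noteq> {}" and "observable_hyperproperty P"
  shows "liveness_hyperproperty P"
  unfolding liveness_hyperproperty_def
proof (intro allI impI)
  fix S :: "'a list set"
  obtain S0 where "S0 \<in> P" using assms(1) by blast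
  then obtain T :: "'a list set" where T: "obs_le T S0" "\<And>S'. obs_le T S' \<Longrightarrow> S' \<in> P"
    using assms(2) unfolding observable_hyperproperty_def by blast
  define S' where "S' = S0 \<union> (\<lambda>s. s \<frown> (\<lambda>_. undefined)) ` S"
  have "S' \<in> P" using T obs_le_mono[of T S0 S'] unfolding S'_def by blast
  moreover have "obs_le S S'" using obs_le_conc obs_le_mono unfolding S'_def by blast
  ultimately show "\<exists>S'. obs_le S S' \<and> S' \<in> P" by blast
qed

end
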